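(* Let $(X,\delta)$ be a diversity with $|X|=n$. The following are equivalent: (i) $(X,\delta)$ is $L_1$-embeddable; (ii) $(X,\delta)$ is $\ell_1^m$-embeddable for some $m\le\binom{n}{\lfloor n/2\rfloor}$; (iii) $\delta$ is a non-negative linear combination of cut diversities $\delta_U$, $U\subseteq X$.
   Context: A diversity on a set $X$ is a function $\delta$ from finite subsets of $X$ to $\mathbb{R}$ with $\delta(A)\ge 0$, $\delta(A)=0$ whenever $|A|\le 1$ (values $0$ on larger sets are allowed), and $\delta(A\cup B)+\delta(B\cup C)\ge\delta(A\cup C)$ for all finite $A,B,C$ with $B\neq\emptyset$. For a measure space $(\Omega,\mathcal{A},\mu)$, the $L_1$ diversity is $(L_1(\Omega,\mu),\delta_1)$ with $\delta_1(F)=\int_\Omega\max\{|f(\omega)-g(\omega)|:f,g\in F\}\,d\mu(\omega)$ for finite $F$; $(X,\delta)$ is $L_1$-embeddable if there is a map $\phi$ into some $L_1$ diversity with $\delta_1(\phi(A))=\delta(A)$ for all $A$. The $\ell_1^m$ diversity is $(\mathbb{R}^m,\delta_1)$ with $\delta_1(A)=\sum_{i=1}^m\max\{|a_i-b_i|:a,b\in A\}$, and $\ell_1^m$-embeddable means there is $\phi:X\to\mathbb{R}^m$ with $\delta_1(\phi(A))=\delta(A)$ for all $A$. For $U\subseteq X$ the cut diversity is $\delta_U(A)=1$ if $A\cap U$ and $A\setminus U$ are both nonempty, and $0$ otherwise. *)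

theory Defs
  imports "HOL-Analysis.Analysis"
begin

definition diversity :: "'a set \<Rightarrow> ('a set \<Rightarrow> real) \<Rightarrow> bool" where
  "diversity X \<delta> \<longleftrightarrow>
     (\<forall>A. finite A \<and> A \<subseteq> X \<longrightarrow> \<delta> A \<ge> 0) \<and>
     (\<forall>A. finite A \<and> A \<subseteq> X \<and> card A \<le> 1 \<longrightarrow> \<delta> A = 0) \<and>
     (\<forall>A B C. finite A \<and> finite B \<and> finite C \<and> A \<subseteq> X \<and> B \<subseteq> X \<and> C \<subseteq> X
        \<and> B \<noteq> {} \<longrightarrow> \<delta> (A \<union> B) + \<delta> (B \<union> C) \<ge> \<delta> (A \<union> C))"

definition L1_div :: "'b measure \<Rightarrow> ('b \<Rightarrow> real) set \<Rightarrow> real" where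
  "L1_div M F = (if F = {} then 0 else
     integral\<^sup>L M (\<lambda>\<omega>. Max {\<bar>f \<omega> - g \<omega>\<bar> | f g. f \<in> F \<and> g \<in> F}))"

text \<open>L1-embeddability, with the underlying measure space living on the type of the TYPE argument.\<close>
definition L1_embeddable_on :: "'b itself \<Rightarrow> 'a set \<Rightarrow> ('a set \<Rightarrow> real) \<Rightarrow> bool" where
  "L1_embeddable_on _ X \<delta> \<longleftrightarrow>
     (\<exists>(M::'b measure) (\<phi>::'a \<Rightarrow> 'b \<Rightarrow> real).
        (\<forall>x\<in>X. integrable M (\<phi> x)) \<and>
        (\<forall>A. finite A \<and> A \<subseteq> X \<longrightarrow> L1_div M (\<phi> ` A) = \<delta> A))"

text \<open>The l1^m diversity value; vectors of R^m are functions nat => real on coordinates i < m.\<close>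
definition l1m_div :: "nat \<Rightarrow> (nat \<Rightarrow> real) set \<Rightarrow> real" where
  "l1m_div m A = (if A = {} then 0 else
     (\<Sum>i<m. Max {\<bar>a i - b i\<bar> | a b. a \<in> A \<and> b \<in> A}))"

definition l1m_embeddable :: "nat \<Rightarrow> 'a set \<Rightarrow> ('a set \<Rightarrow> real) \<Rightarrow> bool" where
  "l1m_embeddable m X \<delta> \<longleftrightarrow>
     (\<exists>\<phi>::'a \<Rightarrow> nat \<Rightarrow> real.
        (\<forall>A. finite A \<and> A \<subseteq> X \<longrightarrow> l1m_div m (\<phi> ` A) = \<delta> A))"

definition cut_div :: "'a set \<Rightarrow> 'a set \<Rightarrow> real" where
  "cut_div U A = (if A \<inter> U \<noteq> {} \<and> A - U \<noteq> {} then 1 else 0)"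

end

theory Submission
  imports Defs
begin

text \<open>
  A real function f on a finite set X is a nonnegative combination of its threshold cuts
  {x \<in> X. f x \<le> t}, each weighted by the gap to the next value of f; the total weight of
  the threshold cuts that separate a set A is exactly the spread max_A f - min_A f. Integrating
  this identity over \<omega> turns an L1 embedding \<phi> into a cut decomposition of \<delta>.

  Conversely, cuts along a chain U_0 \<subset> \<dots> \<subset> U_k with weights c are realised by the single
  coordinate x \<mapsto> \<Sum>{c U_i | x \<notin> U_i}. The de Bruijn-Tengbergen-Kruyswijk partition of
  Pow X into symmetric chains, each of which meets the middle layer exactly once, therefore
  turns a cut decomposition into an embedding into \<ell>_1^m with m \<le> (n choose \<lfloor>n/2\<rfloor>),
  and \<ell>_1^m is L1 of counting measure on m points.
\<close>

section \<open>Threshold cuts of a real function\<close>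

text \<open>Positive only on the threshold sets U = {x \<in> X. f x \<le> t}, where it is the gap between
  the values of f inside and outside U.\<close>
definition cut_coeff :: "'a set \<Rightarrow> ('a \<Rightarrow> real) \<Rightarrow> 'a set \<Rightarrow> real" where
  "cut_coeff X f U =
     (if U = {} \<or> U = X then 0 else max 0 (Min (f ` (X - U)) - Max (f ` U)))"

lemma cut_coeff_nonneg: "cut_coeff X f U \<ge> 0"
  by (simp add: cut_coeff_def)

lemma cut_coeff_pos_imp_less:
  assumes "finite X" "U \<subseteq> X" "cut_coeff X f U > 0" "x \<in> U" "y \<in> X - U"
  shows "f x < f y"
proof -
  have "f x \<le> Max (f ` U)"
    using assms finite_subset by (intro Max_ge) auto
  also have "\<dots> < Min (f ` (X - U))"
    using assms(3) by (auto simp: cut_coeff_def split: if_splits)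
  also have "\<dots> \<le> f y"
    using assms by (intro Min_le) auto
  finally show ?thesis .
qed

lemma cut_coeff_eq_0_if_argmax:
  assumes "finite X" "U \<subseteq> X" "z \<in> U" "\<forall>x\<in>X. f x \<le> f z"
  shows "cut_coeff X f U = 0"
proof (cases "U = X")
  case False
  then obtain y where "y \<in> X - U" using assms(2) by blast
  then have "\<not> cut_coeff X f U > 0"
    using cut_coeff_pos_imp_less[OF assms(1,2) _ assms(3)] assms(4) by fastforce
  then show ?thesis using cut_coeff_nonneg[of X f U] by linarith
qed (simp add: cut_coeff_def)

lemma cut_coeff_remove_argmax:
  assumes "finite X" "z \<in> X" "\<forall>x\<in>X. f x \<le> f z"
    and "w \<in> X - {z}" "\<forall>x\<in>X - {z}. f x \<le> f w" and "U \<subseteq> X - {z}"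
  shows "cut_coeff X f U = cut_coeff (X - {z}) f U + (if U = X - {z} then f z - f w else 0)"
proof (cases "U = {}")
  case True
  then show ?thesis using assms(4) by (auto simp: cut_coeff_def)
next
  case False
  have "U \<noteq> X" using assms(2,6) by blast
  show ?thesis
  proof (cases "U = X - {z}")
    case True
    then have "Max (f ` U) = f w" "X - U = {z}"
      using assms by (auto intro: Max_eqI)
    then show ?thesis using True False \<open>U \<noteq> X\<close> assms(3,4) by (simp add: cut_coeff_def)
  next
    case U_proper: False
    then obtain y where y: "y \<in> X - {z} - U" using assms(6) by blast
    have "X - U = insert z (X - {z} - U)" using assms(2,6) by auto
    moreover have "f ` (X - {z} - U) \<noteq> {}" using y by blast
    ultimately have "Min (f ` (X - U)) = min (f z) (Min (f ` (X - {z} - U)))"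
      using assms(1) by simp
    moreover have "Min (f ` (X - {z} - U)) \<le> f y" using y assms(1) by (intro Min_le) auto
    ultimately have "Min (f ` (X - U)) = Min (f ` (X - {z} - U))"
      using y assms(3) by force
    then show ?thesis using False U_proper \<open>U \<noteq> X\<close> by (simp add: cut_coeff_def)
  qed
qed

lemma sum_cut_coeff_containing:
  assumes "finite X" "x \<in> X"
  shows "(\<Sum>U\<in>{U\<in>Pow X. x \<in> U}. cut_coeff X f U) = Max (f ` X) - f x"
  using assms
proof (induction "card X" arbitrary: X rule: less_induct)
  case less
  obtain z where z: "z \<in> X" "Max (f ` X) = f z"
    using obtains_MAX[of X f] less.prems by blast
  have z_max: "\<forall>y\<in>X. f y \<le> f z" using z less.prems(1) by (metis Max_ge finite_imageI imageI)
  show ?case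
  proof (cases "x = z")
    case True
    then show ?thesis
      using z cut_coeff_eq_0_if_argmax[OF less.prems(1) _ _ z_max] by simp
  next
    case False
    define X' where "X' = X - {z}"
    have x: "x \<in> X'" using False less.prems(2) X'_def by blast
    have fin: "finite X'" using less.prems(1) X'_def by simp
    obtain w where w: "w \<in> X'" "Max (f ` X') = f w"
      using obtains_MAX[of X' f] fin x by blast
    have w_max: "\<forall>y\<in>X'. f y \<le> f w" using w fin by (metis Max_ge finite_imageI imageI)
    have "(\<Sum>U\<in>{U\<in>Pow X. x \<in> U}. cut_coeff X f U) = (\<Sum>U\<in>{U\<in>Pow X'. x \<in> U}. cut_coeff X f U)"
      using less.prems(1) cut_coeff_eq_0_if_argmax[OF less.prems(1) _ _ z_max]
      by (intro sum.mono_neutral_right) (auto simp: X'_def)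
    also have "\<dots> = (\<Sum>U\<in>{U\<in>Pow X'. x \<in> U}.
                      cut_coeff X' f U + (if U = X' then f z - f w else 0))"
      using cut_coeff_remove_argmax[OF less.prems(1) z(1) z_max, of w] w w_max
      by (intro sum.cong) (auto simp: X'_def)
    also have "\<dots> = (Max (f ` X') - f x) + (f z - f w)"
      using less.hyps[of X'] fin x z(1) less.prems(1) card_Diff1_less[of X z]
      by (simp add: sum.distrib X'_def)
    finally show ?thesis using w z by simp
  qed
qed

lemma spread_eq_sum_cut_coeff:
  assumes "finite X" "A \<subseteq> X" "A \<noteq> {}"
  shows "Max (f ` A) - Min (f ` A) = (\<Sum>U\<in>Pow X. cut_coeff X f U * cut_div U A)"
proof -
  have fin: "finite A" using assms finite_subset by blast
  obtain a where a: "a \<in> A" "Min (f ` A) = f a" using obtains_MIN[OF fin assms(3)] by blast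
  obtain b where b: "b \<in> A" "Max (f ` A) = f b" using obtains_MAX[OF fin assms(3)] by blast
  have a_min: "\<forall>y\<in>A. f a \<le> f y" using a fin by (metis Min_le finite_imageI imageI)
  have b_max: "\<forall>y\<in>A. f y \<le> f b" using b fin by (metis Max_ge finite_imageI imageI)
  \<comment> \<open>a cut with positive weight separates A exactly when it contains the minimiser but not the maximiser\<close>
  have separates: "cut_coeff X f U * cut_div U A =
          (if a \<in> U then cut_coeff X f U else 0) - (if b \<in> U then cut_coeff X f U else 0)"
    if "U \<in> Pow X" for U
  proof (cases "cut_coeff X f U > 0")
    case True
    have less: "f x < f y" if "x \<in> U" "y \<in> X - U" for x y
      using cut_coeff_pos_imp_less[OF assms(1) _ True that] \<open>U \<in> Pow X\<close> by blast
    have "a \<in> U" if "y \<in> A" "y \<in> U" for y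
      using less[of y a] a_min a(1) assms(2) that by fastforce
    moreover have "y \<in> U" if "y \<in> A" "b \<in> U" for y
      using less[of b y] b_max b(1) assms(2) that by fastforce
    ultimately have "A \<inter> U \<noteq> {} \<longleftrightarrow> a \<in> U" "A - U \<noteq> {} \<longleftrightarrow> b \<notin> U" "b \<in> U \<longrightarrow> a \<in> U"
      using a(1) b(1) by blast+
    then show ?thesis by (auto simp: cut_div_def)
  next
    case False
    then show ?thesis using cut_coeff_nonneg[of X f U] by simp
  qed
  have "(\<Sum>U\<in>Pow X. cut_coeff X f U * cut_div U A) =
      (\<Sum>U\<in>Pow X. (if a \<in> U then cut_coeff X f U else 0) - (if b \<in> U then cut_coeff X f U else 0))"
    using separates by (rule sum.cong[OF refl])
  also have "\<dots> =
      (\<Sum>U\<in>{U\<in>Pow X. a \<in> U}. cut_coeff X f U) - (\<Sum>U\<in>{U\<in>Pow X. b \<in> U}. cut_coeff X f U)"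
    using assms(1) by (simp add: sum_subtractf flip: sum.inter_filter)
  also have "\<dots> = f b - f a"
    using sum_cut_coeff_containing[OF assms(1), of a f] sum_cut_coeff_containing[OF assms(1), of b f]
      assms(2) a(1) b(1) by (simp only: subsetD)
  finally show ?thesis using a b by simp
qed

section \<open>Chains of cuts\<close>

definition chain_coordinate :: "'a set set \<Rightarrow> ('a set \<Rightarrow> real) \<Rightarrow> 'a \<Rightarrow> real" where
  "chain_coordinate C c x = (\<Sum>U\<in>{U\<in>C. x \<notin> U}. c U)"

lemma spread_chain_coordinate:
  assumes "finite C" "subset.chain UNIV C" "\<forall>U\<in>C. c U \<ge> 0" "finite A" "A \<noteq> {}"
  shows "Max (chain_coordinate C c ` A) - Min (chain_coordinate C c ` A) = (\<Sum>U\<in>C. c U * cut_div U A)"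
proof -
  define S where "S x = {U\<in>C. x \<notin> U}" for x
  have coordinate_eq: "chain_coordinate C c x = sum c (S x)" for x by (simp add: chain_coordinate_def S_def)
  have fin: "finite (S x)" for x using assms(1) by (simp add: S_def)
  have "subset.chain UNIV (S ` A)"
    using assms(2) unfolding subset_chain_def S_def by blast
  then have "\<Union>(S ` A) \<in> S ` A" "\<Inter>(S ` A) \<in> S ` A"
    using assms(4,5) by (simp_all add: Union_in_chain Inter_in_chain)
  then obtain a b where "a \<in> A" "S a = \<Union>(S ` A)" "b \<in> A" "S b = \<Inter>(S ` A)"
    by (metis imageE)
  then have a: "a \<in> A" "\<forall>x\<in>A. S x \<subseteq> S a" and b: "b \<in> A" "\<forall>x\<in>A. S b \<subseteq> S x"
    by auto
  have mono: "sum c (S x) \<le> sum c (S y)" if "S x \<subseteq> S y" for x y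
    using that fin assms(3) by (intro sum_mono2) (auto simp: S_def)
  have max: "Max (chain_coordinate C c ` A) = sum c (S a)"
    using a mono assms(4) by (intro Max_eqI) (auto simp: coordinate_eq)
  have min: "Min (chain_coordinate C c ` A) = sum c (S b)"
    using b mono assms(4) by (intro Min_eqI) (auto simp: coordinate_eq)
  have cut: "cut_div U A = (if U \<in> S a - S b then 1 else 0)" if "U \<in> C" for U
    using a b that by (auto simp: cut_div_def S_def)
  have "(\<Sum>U\<in>C. c U * cut_div U A) = (\<Sum>U\<in>C. if U \<in> S a - S b then c U else 0)"
    using cut by (intro sum.cong) auto
  also have "\<dots> = sum c (S a - S b)"
  proof -
    have "S a - S b = C \<inter> (S a - S b)" by (auto simp: S_def)
    then show ?thesis using sum.inter_restrict[OF assms(1), of c "S a - S b"] by simp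
  qed
  also have "\<dots> = sum c (S a) - sum c (S b)"
    using sum.subset_diff[of "S b" "S a" c] a b fin by simp
  finally show ?thesis using max min by simp
qed

section \<open>Symmetric chain decompositions\<close>

text \<open>(B, [x_1, \<dots>, x_k]) encodes the chain B \<subset> B \<union> {x_1} \<subset> \<dots> \<subset> B \<union> {x_1, \<dots>, x_k};
  it is symmetric in X when its sizes run from |B| to |X| - |B|.\<close>
definition chain_of :: "'a set \<times> 'a list \<Rightarrow> 'a set set" where
  "chain_of p = (\<lambda>k. fst p \<union> set (take k (snd p))) ` {..length (snd p)}"

definition chain_top :: "'a set \<times> 'a list \<Rightarrow> 'a set" where
  "chain_top p = fst p \<union> set (snd p)"

definition symmetric_chain :: "'a set \<Rightarrow> 'a set \<times> 'a list \<Rightarrow> bool" where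
  "symmetric_chain X p \<longleftrightarrow> fst p \<subseteq> X \<and> set (snd p) \<subseteq> X \<and> distinct (snd p)
     \<and> fst p \<inter> set (snd p) = {} \<and> 2 * card (fst p) + length (snd p) = card X"

definition symmetric_chain_decomposition :: "'a set \<Rightarrow> ('a set \<times> 'a list) set \<Rightarrow> bool" where
  "symmetric_chain_decomposition X D \<longleftrightarrow> finite D \<and> (\<forall>p\<in>D. symmetric_chain X p)
     \<and> disjoint_family_on chain_of D \<and> (\<Union>p\<in>D. chain_of p) = Pow X"

lemma finite_chain_of [simp]: "finite (chain_of p)"
  by (simp add: chain_of_def)

lemma chain_top_in_chain_of: "chain_top p \<in> chain_of p"
  unfolding chain_of_def chain_top_def by force

lemma subset_chain_chain_of: "subset.chain UNIV (chain_of p)"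
proof -
  have "set (take j xs) \<subseteq> set (take k xs) \<or> set (take k xs) \<subseteq> set (take j xs)" for j k and xs :: "'a list"
    by (metis nat_le_linear set_take_subset_set_take)
  then show ?thesis unfolding subset_chain_def chain_of_def by blast
qed

lemma chain_of_subset_Pow: "symmetric_chain X p \<Longrightarrow> chain_of p \<subseteq> Pow X"
  unfolding symmetric_chain_def chain_of_def by (auto dest: in_set_takeD)

text \<open>The de Bruijn-Tengbergen-Kruyswijk step for a new element a: the chain
  C_0 \<subset> \<dots> \<subset> C_k yields C_0 \<subset> \<dots> \<subset> C_k \<subset> C_k \<union> {a} and
  C_0 \<union> {a} \<subset> \<dots> \<subset> C_{k-1} \<union> {a}.\<close>
definition chain_extend :: "'a \<Rightarrow> 'a set \<times> 'a list \<Rightarrow> 'a set \<times> 'a list" where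
  "chain_extend a p = (fst p, snd p @ [a])"

definition chain_shift :: "'a \<Rightarrow> 'a set \<times> 'a list \<Rightarrow> 'a set \<times> 'a list" where
  "chain_shift a p = (insert a (fst p), butlast (snd p))"

lemma chain_of_chain_extend:
  "chain_of (chain_extend a p) = insert (insert a (chain_top p)) (chain_of p)"
  unfolding chain_of_def chain_top_def chain_extend_def by (auto simp: atMost_Suc)

lemma chain_of_chain_shift:
  assumes "snd p \<noteq> []" "distinct (snd p)" "fst p \<inter> set (snd p) = {}"
  shows "chain_of (chain_shift a p) = insert a ` (chain_of p - {chain_top p})"
proof -
  obtain m where m: "length (snd p) = Suc m" using assms(1) by (cases "snd p") auto
  let ?C = "(\<lambda>k. fst p \<union> set (take k (snd p))) ` {..m}"
  have last_notin: "last (snd p) \<notin> fst p \<union> set (take k (snd p))" if "k \<le> m" for k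
  proof -
    have "set (take k (snd p)) \<subseteq> set (butlast (snd p))"
      using that m by (metis take_butlast le_imp_less_Suc set_take_subset)
    moreover have "last (snd p) \<notin> set (butlast (snd p))"
      using assms(1,2) by (metis append_butlast_last_id distinct_append not_distinct_conv_prefix)
    ultimately show ?thesis using assms(1,3) last_in_set by blast
  qed
  have "chain_of p = insert (chain_top p) ?C"
    unfolding chain_of_def chain_top_def using m by (simp add: atMost_Suc)
  moreover have "chain_top p \<notin> ?C"
    using last_notin assms(1) by (force simp: chain_top_def)
  moreover have "chain_of (chain_shift a p) = insert a ` ?C"
    unfolding chain_of_def chain_shift_def image_image using m
    by (intro image_cong) (auto simp: take_butlast)
  ultimately show ?thesis by simp
qed

lemma symmetric_chain_extend:
  assumes "finite X" "a \<notin> X" "symmetric_chain X p"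
  shows "symmetric_chain (insert a X) (chain_extend a p)"
  using assms by (auto simp: symmetric_chain_def chain_extend_def)

lemma symmetric_chain_shift:
  assumes "finite X" "a \<notin> X" "symmetric_chain X p" "snd p \<noteq> []"
  shows "symmetric_chain (insert a X) (chain_shift a p)"
proof -
  have "finite (fst p)" "a \<notin> fst p"
    using assms(1-3) finite_subset by (auto simp: symmetric_chain_def)
  moreover have "set (butlast (snd p)) \<subseteq> set (snd p)"
    by (auto dest: in_set_butlastD)
  moreover have "2 * card (insert a (fst p)) + length (butlast (snd p)) = card (insert a X)"
    using calculation(1,2) assms by (cases "snd p") (auto simp: symmetric_chain_def)
  ultimately show ?thesis
    using assms by (auto simp: symmetric_chain_def chain_shift_def distinct_butlast)
qed

lemma chain_of_single: "snd p = [] \<Longrightarrow> chain_of p = {chain_top p}"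
  by (simp add: chain_of_def chain_top_def)

lemma same_chain_if_common_member:
  assumes "symmetric_chain_decomposition X D" "p \<in> D" "q \<in> D" "U \<in> chain_of p" "U \<in> chain_of q"
  shows "p = q"
  using assms unfolding symmetric_chain_decomposition_def disjoint_family_on_def by blast

lemma notin_chain_of_member:
  assumes "symmetric_chain_decomposition X D" "a \<notin> X" "p \<in> D" "U \<in> chain_of p"
  shows "a \<notin> U"
  using assms chain_of_subset_Pow unfolding symmetric_chain_decomposition_def by blast

context
  fixes X :: "'a set" and a :: 'a and D :: "('a set \<times> 'a list) set"
  assumes fin: "finite X" and new: "a \<notin> X" and scd: "symmetric_chain_decomposition X D"
begin

lemma chain_of_chain_shift_member:
  assumes "p \<in> D" "snd p \<noteq> []"
  shows "chain_of (chain_shift a p) = insert a ` (chain_of p - {chain_top p})"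
proof -
  have "symmetric_chain X p" using scd assms(1) by (simp add: symmetric_chain_decomposition_def)
  then show ?thesis using assms(2) by (intro chain_of_chain_shift) (auto simp: symmetric_chain_def)
qed

lemma Union_chain_of_insert:
  "(\<Union>r\<in>chain_extend a ` D \<union> chain_shift a ` {p\<in>D. snd p \<noteq> []}. chain_of r) = Pow (insert a X)"
proof -
  have image_insert_chain_of: "insert a ` chain_of p =
      insert (insert a (chain_top p)) (if snd p = [] then {} else chain_of (chain_shift a p))" if "p \<in> D" for p
    using that chain_top_in_chain_of[of p] chain_of_single[of p] chain_of_chain_shift_member[of p] by auto
  have "insert a ` (\<Union>p\<in>D. chain_of p) = (\<Union>p\<in>D. insert a ` chain_of p)"
    by (rule image_UN)
  also have "\<dots> = (\<Union>p\<in>D. {insert a (chain_top p)})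
      \<union> (\<Union>p\<in>{p\<in>D. snd p \<noteq> []}. chain_of (chain_shift a p))"
    using image_insert_chain_of by (auto split: if_splits)
  finally have "Pow (insert a X) = (\<Union>p\<in>D. chain_of p) \<union> (\<Union>p\<in>D. {insert a (chain_top p)})
      \<union> (\<Union>p\<in>{p\<in>D. snd p \<noteq> []}. chain_of (chain_shift a p))"
    using scd by (simp add: symmetric_chain_decomposition_def Pow_insert Un_assoc)
  then show ?thesis by (auto simp: chain_of_chain_extend)
qed

lemma disjoint_family_on_chain_of_insert:
  "disjoint_family_on chain_of (chain_extend a ` D \<union> chain_shift a ` {p\<in>D. snd p \<noteq> []})"
proof -
  have notin: "a \<notin> U" if "p \<in> D" "U \<in> chain_of p" for p U
    using notin_chain_of_member[OF scd new that] .
  have same: "p = q" if "p \<in> D" "q \<in> D" "U \<in> chain_of p" "U \<in> chain_of q" for p q U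
    using same_chain_if_common_member[OF scd that] .
  have top_eq: "p = q" if "p \<in> D" "q \<in> D" "W \<in> chain_of q" "insert a (chain_top p) = insert a W" for p q W
    using same[OF that(1,2) _ that(3)] that notin chain_top_in_chain_of by (metis insert_ident)
  have extend_extend: "p = q" if "p \<in> D" "q \<in> D"
    "U \<in> chain_of (chain_extend a p)" "U \<in> chain_of (chain_extend a q)" for p q U
  proof (cases "a \<in> U")
    case True
    then have "U = insert a (chain_top p)" "U = insert a (chain_top q)"
      using that notin[of p U] notin[of q U] by (auto simp: chain_of_chain_extend)
    then show ?thesis using top_eq[OF that(1,2) chain_top_in_chain_of] by simp
  next
    case False
    then show ?thesis using that same[of p q U] by (auto simp: chain_of_chain_extend)
  qed
  have shift_shift: "p = q" if hyps: "p \<in> D" "q \<in> D" "snd p \<noteq> []" "snd q \<noteq> []"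
    "U \<in> chain_of (chain_shift a p)" "U \<in> chain_of (chain_shift a q)" for p q U
  proof -
    obtain V W where "V \<in> chain_of p" "W \<in> chain_of q" "insert a V = insert a W"
      using hyps(5,6) chain_of_chain_shift_member[OF hyps(1,3)] chain_of_chain_shift_member[OF hyps(2,4)]
      by auto
    then show ?thesis using same hyps(1,2) notin by (metis insert_ident)
  qed
  have extend_shift: False if hyps: "p \<in> D" "q \<in> D" "snd q \<noteq> []"
    "U \<in> chain_of (chain_extend a p)" "U \<in> chain_of (chain_shift a q)" for p q U
  proof -
    obtain W where W: "W \<in> chain_of q" "W \<noteq> chain_top q" "U = insert a W"
      using hyps(5) chain_of_chain_shift_member[OF hyps(2,3)] by auto
    then have "U = insert a (chain_top p)"
      using hyps(1,4) notin[of p U] by (auto simp: chain_of_chain_extend)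
    then have "insert a (chain_top p) = insert a W" using W(3) by simp
    moreover from this have "p = q" by (rule top_eq[OF hyps(1,2) W(1)])
    ultimately have "chain_top q = W"
      using notin[OF hyps(2) W(1)] notin[OF hyps(2) chain_top_in_chain_of] by (metis insert_ident)
    then show False using W(2) by simp
  qed
  show ?thesis
    unfolding disjoint_family_on_def using extend_extend shift_shift extend_shift by blast
qed

lemma symmetric_chain_decomposition_insert:
  "symmetric_chain_decomposition (insert a X)
     (chain_extend a ` D \<union> chain_shift a ` {p\<in>D. snd p \<noteq> []})"
  using scd symmetric_chain_extend[OF fin new] symmetric_chain_shift[OF fin new]
    Union_chain_of_insert disjoint_family_on_chain_of_insert
  unfolding symmetric_chain_decomposition_def by auto

end

lemma symmetric_chain_decomposition_exists:
  "finite X \<Longrightarrow> \<exists>D. symmetric_chain_decomposition X D"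
proof (induction rule: finite_induct)
  case empty
  have "symmetric_chain_decomposition {} {({}, [])}"
    by (simp add: symmetric_chain_decomposition_def symmetric_chain_def chain_of_def disjoint_family_on_def)
  then show ?case by blast
next
  case (insert a X)
  then obtain D where "symmetric_chain_decomposition X D" by blast
  then show ?case using symmetric_chain_decomposition_insert[OF insert.hyps(1,2)] by blast
qed

lemma card_Un_set_take:
  assumes "finite B" "distinct xs" "B \<inter> set xs = {}" "k \<le> length xs"
  shows "card (B \<union> set (take k xs)) = card B + k"
proof -
  have "B \<inter> set (take k xs) = {}" using assms(3) set_take_subset by fast
  then show ?thesis using assms by (simp add: card_Un_disjoint distinct_card)
qed

lemma card_symmetric_chain_decomposition:
  assumes "finite X" "symmetric_chain_decomposition X D"
  shows "card D \<le> card X choose (card X div 2)"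
proof -
  \<comment> \<open>each symmetric chain meets the middle layer in exactly one set\<close>
  define middle where
    "middle p = fst p \<union> set (take (card X div 2 - card (fst p)) (snd p))" for p :: "'a set \<times> 'a list"
  have middle: "middle p \<in> chain_of p \<and> middle p \<subseteq> X \<and> card (middle p) = card X div 2" if "p \<in> D" for p
  proof -
    have p: "symmetric_chain X p" using assms(2) that by (simp add: symmetric_chain_decomposition_def)
    then have "finite (fst p)" using assms(1) finite_subset by (auto simp: symmetric_chain_def)
    moreover have le: "card X div 2 - card (fst p) \<le> length (snd p)"
      using p by (auto simp: symmetric_chain_def)
    ultimately have "card (middle p) = card X div 2"
      using p card_Un_set_take[of "fst p" "snd p"] unfolding middle_def symmetric_chain_def by auto
    moreover have "middle p \<in> chain_of p" using le by (auto simp: middle_def chain_of_def)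
    ultimately show ?thesis using chain_of_subset_Pow[OF p] by auto
  qed
  have "inj_on middle D"
    using middle same_chain_if_common_member[OF assms(2)] by (metis inj_onI)
  moreover have "middle ` D \<subseteq> {U. U \<subseteq> X \<and> card U = card X div 2}"
    using middle by auto
  ultimately have "card D \<le> card {U. U \<subseteq> X \<and> card U = card X div 2}"
    using assms(1) by (intro card_inj_on_le) auto
  then show ?thesis using assms(1) by (simp add: n_subsets)
qed

section \<open>Embeddings\<close>

definition cut_decomposable :: "'a set \<Rightarrow> ('a set \<Rightarrow> real) \<Rightarrow> bool" where
  "cut_decomposable X \<delta> \<longleftrightarrow> (\<exists>c. (\<forall>U. c U \<ge> 0) \<and>
     (\<forall>A. finite A \<and> A \<subseteq> X \<longrightarrow> \<delta> A = (\<Sum>U\<in>Pow X. c U * cut_div U A)))"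

lemma Max_abs_diff_eq_Max_minus_Min:
  fixes F :: "('b \<Rightarrow> real) set"
  assumes "finite F" "F \<noteq> {}"
  shows "Max {\<bar>f w - g w\<bar> | f g. f \<in> F \<and> g \<in> F} = Max ((\<lambda>f. f w) ` F) - Min ((\<lambda>f. f w) ` F)"
proof (rule Max_eqI)
  have "{\<bar>f w - g w\<bar> | f g. f \<in> F \<and> g \<in> F} = (\<lambda>(f, g). \<bar>f w - g w\<bar>) ` (F \<times> F)"
    by auto
  then show "finite {\<bar>f w - g w\<bar> | f g. f \<in> F \<and> g \<in> F}" using assms(1) by simp
next
  fix y assume "y \<in> {\<bar>f w - g w\<bar> | f g. f \<in> F \<and> g \<in> F}"
  then obtain f g where fg: "f \<in> F" "g \<in> F" "y = \<bar>f w - g w\<bar>" by blast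
  then have "f w \<le> Max ((\<lambda>f. f w) ` F)" "g w \<le> Max ((\<lambda>f. f w) ` F)"
      "Min ((\<lambda>f. f w) ` F) \<le> f w" "Min ((\<lambda>f. f w) ` F) \<le> g w"
    using assms(1) by simp_all
  then show "y \<le> Max ((\<lambda>f. f w) ` F) - Min ((\<lambda>f. f w) ` F)" using fg(3) by linarith
next
  obtain f where f: "f \<in> F" "Max ((\<lambda>f. f w) ` F) = f w" using obtains_MAX[OF assms] by blast
  obtain g where g: "g \<in> F" "Min ((\<lambda>f. f w) ` F) = g w" using obtains_MIN[OF assms] by blast
  have "g w \<le> f w" using f g assms(1) by (metis Max_ge finite_imageI imageI)
  then have "Max ((\<lambda>f. f w) ` F) - Min ((\<lambda>f. f w) ` F) = \<bar>f w - g w\<bar>" using f g by simp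
  then show "Max ((\<lambda>f. f w) ` F) - Min ((\<lambda>f. f w) ` F) \<in> {\<bar>f w - g w\<bar> | f g. f \<in> F \<and> g \<in> F}"
    using f(1) g(1) by blast
qed

lemma integrable_Max_image:
  fixes \<phi> :: "'a \<Rightarrow> 'b \<Rightarrow> real"
  assumes "finite S" "S \<noteq> {}" "\<forall>x\<in>S. integrable M (\<phi> x)"
  shows "integrable M (\<lambda>\<omega>. Max ((\<lambda>x. \<phi> x \<omega>) ` S))"
  using assms by (induction rule: finite_ne_induct) (simp_all add: Max_insert)

lemma integrable_Min_image:
  fixes \<phi> :: "'a \<Rightarrow> 'b \<Rightarrow> real"
  assumes "finite S" "S \<noteq> {}" "\<forall>x\<in>S. integrable M (\<phi> x)"
  shows "integrable M (\<lambda>\<omega>. Min ((\<lambda>x. \<phi> x \<omega>) ` S))"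
  using assms by (induction rule: finite_ne_induct) (simp_all add: Min_insert)

lemma integrable_cut_coeff:
  assumes "finite X" "U \<subseteq> X" "\<forall>x\<in>X. integrable M (\<phi> x)"
  shows "integrable M (\<lambda>\<omega>. cut_coeff X (\<lambda>x. \<phi> x \<omega>) U)"
proof (cases "U = {} \<or> U = X")
  case False
  then have "integrable M (\<lambda>\<omega>. Min ((\<lambda>x. \<phi> x \<omega>) ` (X - U)))"
      "integrable M (\<lambda>\<omega>. Max ((\<lambda>x. \<phi> x \<omega>) ` U))"
    using assms finite_subset by (auto intro!: integrable_Max_image integrable_Min_image)
  then show ?thesis using False by (simp add: cut_coeff_def)
qed (auto simp: cut_coeff_def)

lemma L1_embeddable_imp_cut_decomposable:
  assumes "finite X" "L1_embeddable_on TYPE('b) X \<delta>"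
  shows "cut_decomposable X \<delta>"
proof -
  obtain M :: "'b measure" and \<phi> where int: "\<forall>x\<in>X. integrable M (\<phi> x)"
    and emb: "\<forall>A. finite A \<and> A \<subseteq> X \<longrightarrow> L1_div M (\<phi> ` A) = \<delta> A"
    using assms(2) unfolding L1_embeddable_on_def by blast
  define c where "c U = (\<integral>\<omega>. cut_coeff X (\<lambda>x. \<phi> x \<omega>) U \<partial>M)" for U
  have "\<delta> A = (\<Sum>U\<in>Pow X. c U * cut_div U A)" if A: "finite A" "A \<subseteq> X" for A
  proof (cases "A = {}")
    case True
    then show ?thesis using emb[rule_format, of "{}"] by (simp add: L1_div_def cut_div_def)
  next
    case False
    have spread: "Max {\<bar>f \<omega> - g \<omega>\<bar> | f g. f \<in> \<phi> ` A \<and> g \<in> \<phi> ` A}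
        = (\<Sum>U\<in>Pow X. cut_coeff X (\<lambda>x. \<phi> x \<omega>) U * cut_div U A)" for \<omega>
      using Max_abs_diff_eq_Max_minus_Min[of "\<phi> ` A" \<omega>] spread_eq_sum_cut_coeff[OF assms(1) A(2) False]
        A False by (simp add: image_image)
    have "\<delta> A = L1_div M (\<phi> ` A)" using emb A by simp
    also have "\<dots> = (\<integral>\<omega>. (\<Sum>U\<in>Pow X. cut_coeff X (\<lambda>x. \<phi> x \<omega>) U * cut_div U A) \<partial>M)"
      unfolding L1_div_def spread using False by simp
    also have "\<dots> = (\<Sum>U\<in>Pow X. \<integral>\<omega>. cut_coeff X (\<lambda>x. \<phi> x \<omega>) U * cut_div U A \<partial>M)"
      using integrable_cut_coeff[OF assms(1) _ int] by (intro Bochner_Integration.integral_sum) auto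
    also have "\<dots> = (\<Sum>U\<in>Pow X. c U * cut_div U A)"
      by (simp add: c_def)
    finally show ?thesis .
  qed
  moreover have "c U \<ge> 0" for U
    unfolding c_def by (simp add: cut_coeff_nonneg)
  ultimately show ?thesis unfolding cut_decomposable_def by blast
qed

lemma cut_decomposable_imp_l1m_embeddable:
  assumes "finite X" "cut_decomposable X \<delta>"
  shows "\<exists>m \<le> card X choose (card X div 2). l1m_embeddable m X \<delta>"
proof -
  obtain c where c_nonneg: "\<forall>U. c U \<ge> 0"
    and decomp: "\<forall>A. finite A \<and> A \<subseteq> X \<longrightarrow> \<delta> A = (\<Sum>U\<in>Pow X. c U * cut_div U A)"
    using assms(2) unfolding cut_decomposable_def by blast
  obtain D where D: "symmetric_chain_decomposition X D"
    using symmetric_chain_decomposition_exists[OF assms(1)] by blast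
  then have fin: "finite D" and disj: "disjoint_family_on chain_of D"
    and cover: "(\<Union>p\<in>D. chain_of p) = Pow X"
    by (simp_all add: symmetric_chain_decomposition_def)
  define m where "m = card D"
  obtain h where h: "bij_betw h {..<m} D"
    using ex_bij_betw_nat_finite[OF fin] unfolding m_def atLeast0LessThan by blast
  define \<psi> where "\<psi> x i = chain_coordinate (chain_of (h i)) c x" for x i
  have "l1m_div m (\<psi> ` A) = \<delta> A" if A: "finite A" "A \<subseteq> X" for A
  proof (cases "A = {}")
    case True
    then show ?thesis using decomp by (simp add: l1m_div_def cut_div_def)
  next
    case False
    have coordinate: "Max {\<bar>u i - v i\<bar> | u v. u \<in> \<psi> ` A \<and> v \<in> \<psi> ` A}
        = (\<Sum>U\<in>chain_of (h i). c U * cut_div U A)" for i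
    proof -
      have "Max {\<bar>u i - v i\<bar> | u v. u \<in> \<psi> ` A \<and> v \<in> \<psi> ` A}
          = Max (chain_coordinate (chain_of (h i)) c ` A) - Min (chain_coordinate (chain_of (h i)) c ` A)"
        using Max_abs_diff_eq_Max_minus_Min[of "\<psi> ` A" i] A False
        by (simp add: image_image \<psi>_def)
      also have "\<dots> = (\<Sum>U\<in>chain_of (h i). c U * cut_div U A)"
        using c_nonneg A False by (intro spread_chain_coordinate finite_chain_of subset_chain_chain_of) auto
      finally show ?thesis .
    qed
    have "l1m_div m (\<psi> ` A) = (\<Sum>i<m. \<Sum>U\<in>chain_of (h i). c U * cut_div U A)"
      unfolding l1m_div_def coordinate using False by simp
    also have "\<dots> = (\<Sum>p\<in>D. \<Sum>U\<in>chain_of p. c U * cut_div U A)"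
      by (rule sum.reindex_bij_betw[OF h])
    also have "\<dots> = (\<Sum>U\<in>(\<Union>p\<in>D. chain_of p). c U * cut_div U A)"
      using fin disj by (intro sum.UNION_disjoint_family[symmetric]) simp_all
    also have "\<dots> = \<delta> A"
      using cover decomp A by simp
    finally show ?thesis .
  qed
  moreover have "m \<le> card X choose (card X div 2)"
    using card_symmetric_chain_decomposition[OF assms(1) D] by (simp add: m_def)
  ultimately show ?thesis unfolding l1m_embeddable_def by blast
qed

lemma l1m_embeddable_imp_L1_embeddable:
  assumes "l1m_embeddable m X \<delta>"
  shows "L1_embeddable_on TYPE(nat) X \<delta>"
proof -
  obtain \<psi> :: "'a \<Rightarrow> nat \<Rightarrow> real" where \<psi>: "\<forall>A. finite A \<and> A \<subseteq> X \<longrightarrow> l1m_div m (\<psi> ` A) = \<delta> A"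
    using assms unfolding l1m_embeddable_def by blast
  have "L1_div (count_space {..<m}) (\<psi> ` A) = l1m_div m (\<psi> ` A)" for A
    unfolding L1_div_def l1m_div_def by (simp add: lebesgue_integral_count_space_finite)
  then show ?thesis unfolding L1_embeddable_on_def
    using \<psi> by (intro exI[of _ "count_space {..<m}"] exI[of _ \<psi>]) (auto simp: integrable_count_space)
qed

theorem proposition9:
  fixes X :: "'a set" and \<delta> :: "'a set \<Rightarrow> real" and n :: nat
  assumes "diversity X \<delta>" and "finite X" and "card X = n"
  shows "(L1_embeddable_on TYPE('b) X \<delta> \<longrightarrow>
            (\<exists>m \<le> n choose (n div 2). l1m_embeddable m X \<delta>))
       \<and> ((\<exists>m \<le> n choose (n div 2). l1m_embeddable m X \<delta>) \<longleftrightarrow>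
            (\<exists>c :: 'a set \<Rightarrow> real. (\<forall>U. c U \<ge> 0) \<and>
               (\<forall>A. finite A \<and> A \<subseteq> X \<longrightarrow> \<delta> A = (\<Sum>U\<in>Pow X. c U * cut_div U A))))
       \<and> ((\<exists>c :: 'a set \<Rightarrow> real. (\<forall>U. c U \<ge> 0) \<and>
               (\<forall>A. finite A \<and> A \<subseteq> X \<longrightarrow> \<delta> A = (\<Sum>U\<in>Pow X. c U * cut_div U A)))
            \<longrightarrow> L1_embeddable_on TYPE(nat) X \<delta>)"
proof -
  have L1_cut: "L1_embeddable_on TYPE('b) X \<delta> \<Longrightarrow> cut_decomposable X \<delta>"
    "L1_embeddable_on TYPE(nat) X \<delta> \<Longrightarrow> cut_decomposable X \<delta>"
    using L1_embeddable_imp_cut_decomposable[OF assms(2)] by blast+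
  have cut_l1m: "cut_decomposable X \<delta> \<Longrightarrow> \<exists>m \<le> n choose (n div 2). l1m_embeddable m X \<delta>"
    using cut_decomposable_imp_l1m_embeddable[OF assms(2)] assms(3) by blast
  have l1m_L1: "l1m_embeddable m X \<delta> \<Longrightarrow> L1_embeddable_on TYPE(nat) X \<delta>" for m
    by (rule l1m_embeddable_imp_L1_embeddable)
  show ?thesis
    unfolding cut_decomposable_def[symmetric] using L1_cut cut_l1m l1m_L1 by blast
qed

end
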